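(* Let $k_1,k_2,m$ be nonnegative integers with $k_1\le k_2$ and $k_1+k_2-m\le\dim V$. Let $Y_1\in\mathcal H_{k_1-m}$ and $X_2\in\mathcal H_{k_2}$ be subspaces whose intersection is a single point. Then the following are equivalent: (i) $Y_1\perp^{*}X_2$ (equivalently, $Y_1\perp_x X_2$); (ii) $X_1\perp^{*}X_2$ for every $X_1\in\mathcal H_{k_1}$ such that $Y_1\subset X_1$ and $\dim(X_1\cap X_2)=m$.
   Context: Let $V$ be a vector space over a field with a nondegenerate symmetric bilinear form $\xi$ having no isotropic vectors. Points are elements of $V$; (affine) subspaces are sets $p+W$ with $W$ a linear subspace, of dimension $\dim W$. $\mathcal H_k$ denotes the family of $k$-dimensional subspaces. $X_1\sqcup X_2$ denotes the least subspace containing $X_1\cup X_2$. For nonempty subspaces $X,Y$: $X\perp Y$ iff $\xi(b-a,d-c)=0$ for all $a,b\in X$, $c,d\in Y$; $X\perp_x Y$ iff $X\perp Y$ and $X\cap Y\neq\emptyset$. $X_1\perp^{\circ}X_2$ iff there are a point $q\in X_1\cap X_2$ and subspaces $Z_1,Z_2$ with $q\in Z_1,Z_2$, $Z_i\perp_x X_1\cap X_2$, $Z_1\perp_x Z_2$, and $(X_1\cap X_2)\sqcup Z_i=X_i$ for $i=1,2$. $X_1\perp^{*}X_2$ iff $X_1\perp^{\circ}X_2$ and $X_1\cap X_2$ is different from both $X_1$ and $X_2$. *)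

theory Defs
  imports Main "HOL.Vector_Spaces"
begin

text \<open>Setting: a vector space V (the carrier type 'b) over a field 'a, given by the
scalar multiplication scale (locale vector_space), and a bilinear form xi.\<close>

definition sym_bilinear_form :: "('a::field \<Rightarrow> 'b::ab_group_add \<Rightarrow> 'b) \<Rightarrow> ('b \<Rightarrow> 'b \<Rightarrow> 'a) \<Rightarrow> bool" where
  "sym_bilinear_form scale xi \<longleftrightarrow>
     (\<forall>x y z. xi (x + y) z = xi x z + xi y z) \<and>
     (\<forall>x y z. xi x (y + z) = xi x y + xi x z) \<and>
     (\<forall>c x y. xi (scale c x) y = c * xi x y) \<and>
     (\<forall>c x y. xi x (scale c y) = c * xi x y) \<and>
     (\<forall>x y. xi x y = xi y x)"

definition nondegenerate_form :: "('b::ab_group_add \<Rightarrow> 'b \<Rightarrow> 'a::field) \<Rightarrow> bool" where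
  "nondegenerate_form xi \<longleftrightarrow> (\<forall>v. (\<forall>w. xi v w = 0) \<longrightarrow> v = 0)"

definition no_isotropic :: "('b::ab_group_add \<Rightarrow> 'b \<Rightarrow> 'a::field) \<Rightarrow> bool" where
  "no_isotropic xi \<longleftrightarrow> (\<forall>v. xi v v = 0 \<longrightarrow> v = 0)"

text \<open>dim V \<ge> n: V contains n linearly independent vectors (covers infinite dimension).\<close>
definition dim_ge :: "('a::field \<Rightarrow> 'b::ab_group_add \<Rightarrow> 'b) \<Rightarrow> nat \<Rightarrow> bool" where
  "dim_ge scale n \<longleftrightarrow> (\<exists>B. finite B \<and> \<not> module.dependent scale B \<and> card B = n)"

definition is_sub :: "('a::field \<Rightarrow> 'b::ab_group_add \<Rightarrow> 'b) \<Rightarrow> 'b set \<Rightarrow> bool" where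
  "is_sub scale X \<longleftrightarrow> (\<exists>p W. module.subspace scale W \<and> X = (\<lambda>w. p + w) ` W)"

definition Hk :: "('a::field \<Rightarrow> 'b::ab_group_add \<Rightarrow> 'b) \<Rightarrow> nat \<Rightarrow> 'b set set" where
  "Hk scale k = {X. \<exists>p B. finite B \<and> \<not> module.dependent scale B \<and> card B = k \<and>
                       X = (\<lambda>w. p + w) ` module.span scale B}"

definition join :: "('a::field \<Rightarrow> 'b::ab_group_add \<Rightarrow> 'b) \<Rightarrow> 'b set \<Rightarrow> 'b set \<Rightarrow> 'b set" where
  "join scale X1 X2 = \<Inter>{Y. is_sub scale Y \<and> X1 \<union> X2 \<subseteq> Y}"

definition perp :: "('b::ab_group_add \<Rightarrow> 'b \<Rightarrow> 'a::field) \<Rightarrow> 'b set \<Rightarrow> 'b set \<Rightarrow> bool" where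
  "perp xi X Y \<longleftrightarrow> X \<noteq> {} \<and> Y \<noteq> {} \<and>
     (\<forall>a\<in>X. \<forall>b\<in>X. \<forall>c\<in>Y. \<forall>d\<in>Y. xi (b - a) (d - c) = 0)"

definition perp_x :: "('b::ab_group_add \<Rightarrow> 'b \<Rightarrow> 'a::field) \<Rightarrow> 'b set \<Rightarrow> 'b set \<Rightarrow> bool" where
  "perp_x xi X Y \<longleftrightarrow> perp xi X Y \<and> X \<inter> Y \<noteq> {}"

definition perp_circ :: "('a::field \<Rightarrow> 'b::ab_group_add \<Rightarrow> 'b) \<Rightarrow> ('b \<Rightarrow> 'b \<Rightarrow> 'a) \<Rightarrow> 'b set \<Rightarrow> 'b set \<Rightarrow> bool" where
  "perp_circ scale xi X1 X2 \<longleftrightarrow>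
     (\<exists>q \<in> X1 \<inter> X2. \<exists>Z1 Z2. is_sub scale Z1 \<and> is_sub scale Z2 \<and> q \<in> Z1 \<and> q \<in> Z2 \<and>
        perp_x xi Z1 (X1 \<inter> X2) \<and> perp_x xi Z2 (X1 \<inter> X2) \<and> perp_x xi Z1 Z2 \<and>
        join scale (X1 \<inter> X2) Z1 = X1 \<and> join scale (X1 \<inter> X2) Z2 = X2)"

definition perp_star :: "('a::field \<Rightarrow> 'b::ab_group_add \<Rightarrow> 'b) \<Rightarrow> ('b \<Rightarrow> 'b \<Rightarrow> 'a) \<Rightarrow> 'b set \<Rightarrow> 'b set \<Rightarrow> bool" where
  "perp_star scale xi X1 X2 \<longleftrightarrow> perp_circ scale xi X1 X2 \<and> X1 \<inter> X2 \<noteq> X1 \<and> X1 \<inter> X2 \<noteq> X2"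

end

theory Submission
  imports Defs
begin

text \<open>
Translating everything to the point p where Y1 meets X2, the subspaces become p + U1 and p + W2
with U1 \<inter> W2 = 0, and Y1 \<perp>* X2 just says that U1 and W2 are nonzero and orthogonal. In
general, X1 \<perp>* X2 means that X1 and X2 arise from their common part D by adjoining subspaces
A1, A2 orthogonal to D and to each other.

If U1 \<perp> W2 and X1 = p + W1 contains Y1 with W1 \<inter> W2 = D of dimension m, then counting
dimensions gives W1 = D + U1, and W2 is the sum of D and its orthogonal complement in W2
because anisotropy provides orthogonal projections onto D; this exhibits X1 \<perp>* X2.
Conversely, given u \<in> U1 and w \<in> W2, the vectors of W2 orthogonal to w span a subspace of
dimension at least k2 - 1 \<ge> m, so we may choose D of dimension m in it and let W1 = U1 + D.
Then X1 \<perp>* X2, and decomposing u = d1 + a1, w = d2 + a2 along the adjoined subspaces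
gives \<xi>(u, w) = 0.
\<close>

definition translate :: "'b::ab_group_add \<Rightarrow> 'b set \<Rightarrow> 'b set" where
  "translate p W = (\<lambda>w. p + w) ` W"

lemma mem_translate: "x \<in> translate p W \<longleftrightarrow> x - p \<in> W"
  unfolding translate_def by (auto simp: image_iff) (metis add.commute diff_add_cancel)

lemma translate_subset_iff: "translate p W \<subseteq> translate p W' \<longleftrightarrow> W \<subseteq> W'"
  unfolding translate_def by (simp add: inj_image_subset_iff inj_def)

lemma translate_inj: "translate p W = translate p W' \<longleftrightarrow> W = W'"
  unfolding translate_def by (simp add: inj_image_eq_iff inj_def)

lemma translate_Int: "translate p W \<inter> translate p W' = translate p (W \<inter> W')"
  by (auto simp: mem_translate)

lemma translate_singleton_0: "translate p {0} = {p}"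
  unfolding set_eq_iff mem_translate by auto

context vector_space
begin

lemma translate_self: "subspace W \<Longrightarrow> p \<in> translate p W"
  by (simp add: mem_translate subspace_0)

lemma translate_rebase:
  assumes "subspace W" "q \<in> translate p W"
  shows "translate q W = translate p W"
proof -
  have qp: "q - p \<in> W" using assms(2) by (simp add: mem_translate)
  have "x - q \<in> W \<longleftrightarrow> x - p \<in> W" for x
  proof -
    have "x - p = (x - q) + (q - p)" "x - q = (x - p) - (q - p)" by simp_all
    then show ?thesis using qp assms(1) subspace_add subspace_diff by metis
  qed
  then show ?thesis by (auto simp: mem_translate)
qed

lemma is_sub_translate: "subspace W \<Longrightarrow> is_sub scale (translate p W)"
  unfolding is_sub_def translate_def by blast

lemma is_sub_obtain_translate:
  assumes "is_sub scale X" "q \<in> X"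
  obtains W where "subspace W" "X = translate q W"
proof -
  obtain p W where W: "subspace W" "X = translate p W"
    using assms(1) unfolding is_sub_def translate_def by blast
  then have "X = translate q W" using assms(2) translate_rebase by simp
  with W(1) show thesis by (rule that)
qed

lemma Hk_obtain_basis:
  assumes "X \<in> Hk scale k" "q \<in> X"
  obtains B where "finite B" "independent B" "card B = k" "X = translate q (span B)"
proof -
  obtain p B where B: "finite B" "independent B" "card B = k" "X = translate p (span B)"
    using assms(1) unfolding Hk_def translate_def by blast
  then have "X = translate q (span B)" using assms(2) translate_rebase[OF subspace_span] by simp
  with B(1-3) show thesis by (rule that)
qed

lemma Hk_translate_span: "finite B \<Longrightarrow> independent B \<Longrightarrow> translate q (span B) \<in> Hk scale (card B)"
  unfolding Hk_def translate_def by blast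

lemma Hk_subset_obtain:
  assumes "X \<in> Hk scale k" "p \<in> X" "m \<le> k"
  obtains X' where "X' \<in> Hk scale m" "p \<in> X'" "X' \<subseteq> X"
proof -
  obtain B where B: "finite B" "independent B" "card B = k" "X = translate p (span B)"
    using Hk_obtain_basis assms(1,2) .
  obtain C where C: "C \<subseteq> B" "card C = m"
    using obtain_subset_with_card_n assms(3) B(3) by metis
  show thesis
  proof
    show "translate p (span C) \<in> Hk scale m"
      using Hk_translate_span C B(1,2) finite_subset independent_mono by metis
    show "p \<in> translate p (span C)" by (simp add: translate_self)
    show "translate p (span C) \<subseteq> X"
      using B(4) C(1) span_mono translate_subset_iff by metis
  qed
qed

lemma nonempty_if_perp_star_Hk_extensions:
  assumes "finite B2" "independent B2" "card B1 + m \<le> card B2"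
    and ext: "\<forall>X1 \<in> Hk scale (card B1 + m). translate p (span B1) \<subseteq> X1 \<and>
      X1 \<inter> translate p (span B2) \<in> Hk scale m \<longrightarrow> perp_star scale xi X1 (translate p (span B2))"
  shows "B1 \<noteq> {}"
proof
  assume "B1 = {}"
  have "translate p (span B2) \<in> Hk scale (card B2)" "p \<in> translate p (span B2)" "m \<le> card B2"
    using Hk_translate_span[OF assms(1,2)] translate_self[OF subspace_span] assms(3) by auto
  then obtain X1 where X1: "X1 \<in> Hk scale m" "p \<in> X1" "X1 \<subseteq> translate p (span B2)"
    by (rule Hk_subset_obtain)
  have "X1 \<in> Hk scale (card B1 + m)" using X1(1) \<open>B1 = {}\<close> by simp
  moreover have "translate p (span B1) \<subseteq> X1"
    using X1(2) \<open>B1 = {}\<close> by (simp add: translate_singleton_0)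
  moreover have "X1 \<inter> translate p (span B2) \<in> Hk scale m" using X1(1,3) by (simp add: Int_absorb2)
  ultimately have "perp_star scale xi X1 (translate p (span B2))" using ext by blast
  then show False using X1(3) by (simp add: perp_star_def Int_absorb2)
qed

lemma join_translate:
  assumes "subspace S" "subspace T"
  shows "join scale (translate q S) (translate q T) = translate q (span (S \<union> T))"
proof
  have "translate q S \<union> translate q T \<subseteq> translate q (span (S \<union> T))"
    using translate_subset_iff span_superset by (metis Un_subset_iff le_supE)
  then show "join scale (translate q S) (translate q T) \<subseteq> translate q (span (S \<union> T))"
    unfolding join_def using is_sub_translate[OF subspace_span] by (intro Inter_lower) blast
next
  show "translate q (span (S \<union> T)) \<subseteq> join scale (translate q S) (translate q T)"
    unfolding join_def
  proof (rule Inter_greatest)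
    fix Y assume "Y \<in> {Y. is_sub scale Y \<and> translate q S \<union> translate q T \<subseteq> Y}"
    then have Y: "is_sub scale Y" "translate q S \<union> translate q T \<subseteq> Y" by simp_all
    then have "q \<in> Y" using translate_self[OF assms(1)] by blast
    then obtain W where W: "subspace W" "Y = translate q W"
      using is_sub_obtain_translate Y(1) by blast
    then have "S \<union> T \<subseteq> W" using Y(2) translate_subset_iff by blast
    then show "translate q (span (S \<union> T)) \<subseteq> Y"
      using W span_minimal translate_subset_iff by metis
  qed
qed

lemma span_Un_subspaceE:
  assumes "subspace S" "subspace T" "x \<in> span (S \<union> T)"
  obtains a b where "a \<in> S" "b \<in> T" "x = a + b"
  using assms span_Un span_eq_iff by (smt (verit) mem_Collect_eq)

lemma span_Un_span: "span (span A \<union> span B) = span (A \<union> B)"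
  by (simp add: span_Un span_span)

lemma span_eq_zero_iff:
  assumes "independent B"
  shows "span B = {0} \<longleftrightarrow> B = {}"
proof
  assume "span B = {0}"
  then have "B \<subseteq> {0}" using span_superset by blast
  then show "B = {}" using assms dependent_zero by blast
qed simp

lemma independent_Un_card:
  assumes "independent A" "finite A" "independent C" "finite C" "span A \<inter> span C \<subseteq> {0}"
  shows "independent (A \<union> C)" and "card (A \<union> C) = card A + card C"
proof -
  show "independent (A \<union> C)"
    using assms(4,3,5)
  proof (induction C rule: finite_induct)
    case empty then show ?case using assms(1) by simp
  next
    case (insert c C)
    have "span A \<inter> span C \<subseteq> {0}" using insert.prems(2) span_mono[of C "insert c C"] by blast
    then have IH: "independent (A \<union> C)" using insert independent_mono by blast
    have "c \<notin> span (A \<union> C)"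
    proof
      assume "c \<in> span (A \<union> C)"
      then obtain a b where ab: "a \<in> span A" "b \<in> span C" "c = a + b" using span_Un by blast
      have "c - b \<in> span (insert c C)"
        by (meson ab(2) in_mono span_base span_diff span_mono insertI1 subset_insertI)
      then have "a = 0" using insert.prems(2) ab by auto
      moreover have "c \<notin> span C" using insert.prems(1) insert.hyps(2) independent_insert by metis
      ultimately show False using ab by simp
    qed
    then show ?case using independent_insertI[OF _ IH] by simp
  qed
  have "A \<inter> C = {}" using assms(1,5) span_superset dependent_zero by blast
  then show "card (A \<union> C) = card A + card C" using assms(2,4) card_Un_disjoint by blast
qed

lemma span_eq_if_card_eq:
  assumes "independent S" "finite B" "S \<subseteq> span B" "card S = card B"
  shows "span S = span B"
proof
  show "span S \<subseteq> span B" using assms(3) span_minimal subspace_span by blast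
  have "B \<subseteq> span S"
  proof
    fix b assume b: "b \<in> B"
    show "b \<in> span S"
    proof (rule ccontr)
      assume nb: "b \<notin> span S"
      then have "independent (insert b S)" using independent_insertI assms(1) by blast
      moreover have "insert b S \<subseteq> span B" using b assms(3) span_base by blast
      ultimately have "card (insert b S) \<le> card B" using independent_span_bound assms(2) by blast
      moreover have "finite S" using independent_span_bound assms(1-3) by blast
      moreover have "b \<notin> S" using nb span_base by blast
      ultimately show False using assms(4) by simp
    qed
  qed
  then show "span B \<subseteq> span S" using span_minimal subspace_span by blast
qed

lemma span_Un_Int_eq:
  assumes "subspace U" "subspace D" "subspace W" "D \<subseteq> W" "U \<inter> W = {0}"
  shows "span (U \<union> D) \<inter> W = D"
proof
  show "span (U \<union> D) \<inter> W \<subseteq> D"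
  proof
    fix x assume x: "x \<in> span (U \<union> D) \<inter> W"
    then obtain a b where ab: "a \<in> U" "b \<in> D" "x = a + b" using span_Un_subspaceE assms(1,2) by blast
    then have "a = x - b" by simp
    then have "a \<in> W" using x ab(2) assms(3,4) subspace_diff by blast
    then have "a = 0" using ab(1) assms(5) by blast
    then show "x \<in> D" using ab by simp
  qed
  show "D \<subseteq> span (U \<union> D) \<inter> W" using assms(4) span_superset by blast
qed

end

locale anisotropic_form = vector_space scale for scale :: "'a::field \<Rightarrow> 'b::ab_group_add \<Rightarrow> 'b" +
  fixes xi :: "'b \<Rightarrow> 'b \<Rightarrow> 'a"
  assumes sym_bilinear: "sym_bilinear_form scale xi" and anisotropic: "no_isotropic xi"
begin

lemma form_add_left: "xi (x + y) z = xi x z + xi y z"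
  using sym_bilinear unfolding sym_bilinear_form_def by blast

lemma form_add_right: "xi x (y + z) = xi x y + xi x z"
  using sym_bilinear unfolding sym_bilinear_form_def by blast

lemma form_scale_left: "xi (scale c x) y = c * xi x y"
  using sym_bilinear unfolding sym_bilinear_form_def by blast

lemma form_scale_right: "xi x (scale c y) = c * xi x y"
  using sym_bilinear unfolding sym_bilinear_form_def by blast

lemma form_commute: "xi x y = xi y x"
  using sym_bilinear unfolding sym_bilinear_form_def by blast

lemma form_zero_left [simp]: "xi 0 y = 0"
proof -
  have "xi 0 y + xi 0 y = xi 0 y + 0" using form_add_left[of 0 0 y] by simp
  then show ?thesis by (rule add_left_imp_eq)
qed

lemma form_zero_right [simp]: "xi y 0 = 0"
  using form_commute by simp

lemma form_diff_left: "xi (x - y) z = xi x z - xi y z"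
  using form_add_left[of "x - y" y z] by (simp add: eq_diff_eq)

lemma form_self_eq_0D: "xi v v = 0 \<Longrightarrow> v = 0"
  using anisotropic unfolding no_isotropic_def by blast

definition orth :: "'b set \<Rightarrow> 'b set \<Rightarrow> bool" where
  "orth A B \<longleftrightarrow> (\<forall>a\<in>A. \<forall>b\<in>B. xi a b = 0)"

lemma orth_commute: "orth A B \<longleftrightarrow> orth B A"
  unfolding orth_def by (auto, metis form_commute, metis form_commute)

lemma orth_mono: "orth A B \<Longrightarrow> A' \<subseteq> A \<Longrightarrow> B' \<subseteq> B \<Longrightarrow> orth A' B'"
  unfolding orth_def by blast

lemma orth_zero_right [simp]: "orth A {0}"
  unfolding orth_def by simp

lemma subspace_orthogonal_complement: "subspace W \<Longrightarrow> subspace {w \<in> W. orth S {w}}"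
  unfolding orth_def
  by (rule subspaceI) (auto simp: form_add_right form_scale_right subspace_0 subspace_add subspace_scale)

lemma orth_span_right:
  assumes "orth A C"
  shows "orth A (span C)"
proof -
  have "span C \<subseteq> {x. orth A {x}}"
    using assms subspace_orthogonal_complement[OF subspace_UNIV, of A]
    by (intro span_minimal) (auto simp: orth_def)
  then show ?thesis unfolding orth_def by blast
qed

text \<open>Gram-Schmidt: anisotropy makes the denominator xi c' c' nonzero.\<close>
lemma orthogonal_projection_exists: "finite C \<Longrightarrow> \<exists>d\<in>span C. orth {v - d} C"
proof (induction C arbitrary: v rule: finite_induct)
  case empty then show ?case using span_zero by (simp add: orth_def)
next
  case (insert c C)
  obtain d0 where d0: "d0 \<in> span C" "orth {v - d0} (span C)"
    using insert.IH orth_span_right by blast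
  obtain e where e: "e \<in> span C" "orth {c - e} (span C)"
    using insert.IH orth_span_right by blast
  define c' where "c' = c - e"
  define d where "d = d0 + scale (xi (v - d0) c' / xi c' c') c'"
  have "d \<in> span (insert c C)"
    unfolding d_def c'_def
    by (meson d0(1) e(1) in_mono span_add span_base span_diff span_mono span_scale insertI1 subset_insertI)
  moreover have on_C: "xi (v - d) y = 0" if "y \<in> span C" for y
    using d0(2) e(2) that form_commute[of c' y]
    by (simp add: d_def c'_def orth_def diff_diff_eq[symmetric] form_diff_left form_scale_left)
  moreover have "xi (v - d) c' = 0"
    using form_self_eq_0D[of c']
    by (cases "xi c' c' = 0") (simp_all add: d_def diff_diff_eq[symmetric] form_diff_left form_scale_left)
  then have "xi (v - d) c = 0"
    using on_C[OF e(1)] form_add_right[of "v - d" c' e] by (simp add: c'_def)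
  ultimately show ?case using span_base by (auto simp: orth_def intro!: bexI[of _ d])
qed

lemma span_Un_orthogonal_complement:
  assumes "finite C" "subspace W" "span C \<subseteq> W"
  shows "span (span C \<union> {w \<in> W. orth (span C) {w}}) = W"
proof
  show "span (span C \<union> {w \<in> W. orth (span C) {w}}) \<subseteq> W"
    using assms(2,3) span_minimal by (metis (no_types, lifting) Un_subset_iff mem_Collect_eq subsetI)
  show "W \<subseteq> span (span C \<union> {w \<in> W. orth (span C) {w}})"
  proof
    fix w assume w: "w \<in> W"
    obtain d where d: "d \<in> span C" "orth {w - d} C" using orthogonal_projection_exists assms(1) by blast
    then have "w - d \<in> W" using w assms subspace_diff by blast
    then have "w - d \<in> {w \<in> W. orth (span C) {w}}"
      using orth_span_right[OF d(2)] orth_commute by blast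
    then have "d + (w - d) \<in> span (span C \<union> {w \<in> W. orth (span C) {w}})"
      using d(1) by (intro span_add) (simp_all add: span_base)
    then show "w \<in> span (span C \<union> {w \<in> W. orth (span C) {w}})" by simp
  qed
qed

lemma independent_orthogonal_obtain:
  assumes "finite B" "independent B" "w \<in> span B"
  obtains C where "C \<subseteq> span B" "independent C" "finite C" "card B \<le> card C + 1" "orth C {w}"
proof -
  define f where "f b = b - scale (xi b w / xi w w) w" for b
    \<comment> \<open>for w = 0 the division by zero makes f the identity, which is harmless\<close>
  have f_orth: "xi (f b) w = 0" for b
    using form_self_eq_0D[of w]
    by (cases "xi w w = 0") (simp_all add: f_def form_diff_left form_scale_left)
  obtain C where C: "C \<subseteq> f ` B" "independent C" "f ` B \<subseteq> span C"
    using maximal_independent_subset by blast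
  have "finite C" using C(1) assms(1) finite_subset by blast
  have "B \<subseteq> span (insert w C)"
  proof
    fix b assume "b \<in> B"
    then have "f b + scale (xi b w / xi w w) w \<in> span (insert w C)"
      using C(3) span_mono[of C "insert w C"]
      by (intro span_add span_scale) (auto simp: span_base)
    then show "b \<in> span (insert w C)" by (simp add: f_def)
  qed
  then have "card B \<le> card (insert w C)"
    using independent_span_bound[OF _ assms(2)] \<open>finite C\<close> by blast
  also have "\<dots> \<le> card C + 1" using \<open>finite C\<close> by (simp add: card_insert_if)
  finally have "card B \<le> card C + 1" .
  moreover have "f b \<in> span B" if "b \<in> B" for b
    using that assms(3) by (simp add: f_def span_base span_diff span_scale)
  then have "C \<subseteq> span B" using C(1) by blast
  moreover have "orth C {w}" using C(1) f_orth by (auto simp: orth_def)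
  ultimately show thesis using that C(2) \<open>finite C\<close> by blast
qed

lemma perp_translate:
  assumes "subspace W" "subspace W'"
  shows "perp xi (translate p W) (translate q W') \<longleftrightarrow> orth W W'"
proof
  assume h: "perp xi (translate p W) (translate q W')"
  show "orth W W'"
    unfolding orth_def
  proof (intro ballI)
    fix a b assume "a \<in> W" "b \<in> W'"
    then have "p \<in> translate p W" "p + a \<in> translate p W" "q \<in> translate q W'" "q + b \<in> translate q W'"
      using assms by (auto simp: mem_translate subspace_0)
    then have "xi ((p + a) - p) ((q + b) - q) = 0" using h unfolding perp_def by blast
    then show "xi a b = 0" by simp
  qed
next
  assume h: "orth W W'"
  have "xi (b - a) (d - c) = 0"
    if "a \<in> translate p W" "b \<in> translate p W" "c \<in> translate q W'" "d \<in> translate q W'" for a b c d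
  proof -
    have e: "b - a = (b - p) - (a - p)" "d - c = (d - q) - (c - q)" by simp_all
    have m: "b - p \<in> W" "a - p \<in> W" "d - q \<in> W'" "c - q \<in> W'"
      using that by (simp_all add: mem_translate)
    have "b - a \<in> W" unfolding e(1) by (rule subspace_diff[OF assms(1) m(1,2)])
    moreover have "d - c \<in> W'" unfolding e(2) by (rule subspace_diff[OF assms(2) m(3,4)])
    ultimately show ?thesis using h by (simp add: orth_def)
  qed
  then show "perp xi (translate p W) (translate q W')"
    unfolding perp_def using translate_self assms by blast
qed

lemma perp_x_translate:
  "subspace W \<Longrightarrow> subspace W' \<Longrightarrow> perp_x xi (translate p W) (translate p W') \<longleftrightarrow> orth W W'"
  unfolding perp_x_def using perp_translate translate_self by blast

lemma perp_star_translate_iff: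
  assumes W1: "subspace W1" and W2: "subspace W2"
  shows "perp_star scale xi (translate p W1) (translate p W2) \<longleftrightarrow>
    W1 \<inter> W2 \<noteq> W1 \<and> W1 \<inter> W2 \<noteq> W2 \<and>
    (\<exists>A1 A2. subspace A1 \<and> subspace A2 \<and>
       orth A1 (W1 \<inter> W2) \<and> orth A2 (W1 \<inter> W2) \<and> orth A1 A2 \<and>
       span (W1 \<inter> W2 \<union> A1) = W1 \<and> span (W1 \<inter> W2 \<union> A2) = W2)"
    (is "_ \<longleftrightarrow> _ \<and> _ \<and> ?split")
proof -
  define D where "D = W1 \<inter> W2"
  have D: "subspace D" unfolding D_def using W1 W2 subspace_inter by blast
  have I: "translate p W1 \<inter> translate p W2 = translate p D"
    unfolding D_def translate_Int ..
  have "perp_circ scale xi (translate p W1) (translate p W2) \<longleftrightarrow> ?split"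
  proof
    assume "perp_circ scale xi (translate p W1) (translate p W2)"
    then obtain q Z1 Z2 where q: "q \<in> translate p D" and Z: "is_sub scale Z1" "is_sub scale Z2"
      "q \<in> Z1" "q \<in> Z2" "perp_x xi Z1 (translate p D)" "perp_x xi Z2 (translate p D)" "perp_x xi Z1 Z2"
      "join scale (translate p D) Z1 = translate p W1" "join scale (translate p D) Z2 = translate p W2"
      unfolding perp_circ_def I by blast
    have "translate p D \<subseteq> translate p W1" "translate p D \<subseteq> translate p W2"
      unfolding D_def translate_subset_iff by auto
    then have rebase: "translate q D = translate p D" "translate q W1 = translate p W1"
      "translate q W2 = translate p W2"
      using q translate_rebase D W1 W2 by blast+
    obtain A1 A2 where A: "subspace A1" "Z1 = translate q A1" "subspace A2" "Z2 = translate q A2"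
      using is_sub_obtain_translate Z(1-4) by metis
    show ?split
      unfolding D_def[symmetric]
    proof (intro exI conjI)
      show "orth A1 D" "orth A2 D" "orth A1 A2"
        using Z(5-7) perp_x_translate A D rebase(1) by metis+
      show "span (D \<union> A1) = W1" "span (D \<union> A2) = W2"
        using Z(8,9) join_translate[OF D] A rebase translate_inj by metis+
    qed (use A in auto)
  next
    assume ?split
    then obtain A1 A2 where A: "subspace A1" "subspace A2" "orth A1 D" "orth A2 D" "orth A1 A2"
      "span (D \<union> A1) = W1" "span (D \<union> A2) = W2"
      unfolding D_def by blast
    show "perp_circ scale xi (translate p W1) (translate p W2)"
      unfolding perp_circ_def I
      using A D translate_self perp_x_translate is_sub_translate join_translate[OF D]
      by (intro bexI[of _ p] exI[of _ "translate p A1"] exI[of _ "translate p A2"]) auto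
  qed
  then show ?thesis
    unfolding perp_star_def I D_def translate_inj by blast
qed

lemma perp_star_translate_complementary:
  assumes "subspace U" "subspace W" "U \<inter> W = {0}"
  shows "perp_star scale xi (translate p U) (translate p W) \<longleftrightarrow> U \<noteq> {0} \<and> W \<noteq> {0} \<and> orth U W"
proof -
  have "(\<exists>A1 A2. subspace A1 \<and> subspace A2 \<and> orth A1 {0} \<and> orth A2 {0} \<and> orth A1 A2 \<and>
      span ({0} \<union> A1) = U \<and> span ({0} \<union> A2) = W) \<longleftrightarrow> orth U W" (is "?split \<longleftrightarrow> _")
  proof
    show "orth U W" if ?split
      using that assms(1,2) by (auto simp: span_eq_iff[THEN iffD2])
    show ?split if "orth U W"
      by (rule exI[of _ U], rule exI[of _ W]) (use that assms(1,2) in \<open>simp add: span_eq_iff[THEN iffD2]\<close>)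
  qed
  then show ?thesis
    unfolding perp_star_translate_iff[OF assms(1,2)] assms(3) by blast
qed

text \<open>Both sides split along the common part D, so only the adjoined parts can meet, and they
are orthogonal.\<close>
lemma form_eq_0_if_perp_star_translate:
  assumes "subspace W1" "subspace W2" "perp_star scale xi (translate p W1) (translate p W2)"
    and "u \<in> W1" "w \<in> W2" "orth (W1 \<inter> W2) {w}"
  shows "xi u w = 0"
proof -
  define D where "D = W1 \<inter> W2"
  have D: "subspace D" unfolding D_def using assms(1,2) subspace_inter by blast
  obtain A1 A2 where A: "subspace A1" "subspace A2" "orth A1 D" "orth A1 A2"
    "span (D \<union> A1) = W1" "span (D \<union> A2) = W2"
    using assms(3) unfolding perp_star_translate_iff[OF assms(1,2)] D_def by blast
  obtain d1 a1 where u: "d1 \<in> D" "a1 \<in> A1" "u = d1 + a1"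
    using span_Un_subspaceE[OF D A(1)] assms(4) A(5) by blast
  obtain d2 a2 where w: "d2 \<in> D" "a2 \<in> A2" "w = d2 + a2"
    using span_Un_subspaceE[OF D A(2)] assms(5) A(6) by blast
  have "xi d1 w = 0" using assms(6) u(1) unfolding D_def orth_def by blast
  moreover have "xi a1 w = 0"
    using A(3,4) u(2) w by (simp add: orth_def form_add_right)
  ultimately show ?thesis using u(3) by (simp add: form_add_left)
qed

lemma perp_star_translate_if_orth:
  assumes U: "subspace U" and W1: "subspace W1" and W2: "subspace W2" and "finite C"
    and D: "W1 \<inter> W2 = span C" and W1_eq: "span (span C \<union> U) = W1"
    and "U \<inter> W2 = {0}" "U \<noteq> {0}" "W1 \<inter> W2 \<noteq> W2" "orth U W2"
  shows "perp_star scale xi (translate p W1) (translate p W2)"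
  unfolding perp_star_translate_iff[OF W1 W2] D
proof (intro conjI exI)
  have "U \<subseteq> W1" using W1_eq span_superset by blast
  then show "span C \<noteq> W1" using D assms(7,8) subspace_0[OF U] by blast
  show "span C \<noteq> W2" using D assms(9) by simp
  let ?A2 = "{w \<in> W2. orth (span C) {w}}"
  show "subspace U" "subspace ?A2" using U W2 subspace_orthogonal_complement by blast+
  show "orth U (span C)" "orth U ?A2"
    using assms(10) D by (auto elim: orth_mono)
  show "orth ?A2 (span C)" unfolding orth_def using form_commute by (auto simp: orth_def)
  show "span (span C \<union> U) = W1" by (rule W1_eq)
  show "span (span C \<union> ?A2) = W2"
    using span_Un_orthogonal_complement assms(4) W2 D by blast
qed

lemma perp_star_Hk_extension:
  assumes B1: "finite B1" "independent B1" "B1 \<noteq> {}" and B2: "finite B2" "independent B2"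
    and "span B1 \<inter> span B2 = {0}" "orth (span B1) (span B2)" "card B1 + m \<le> card B2"
    and X1: "X1 \<in> Hk scale (card B1 + m)" "translate p (span B1) \<subseteq> X1"
      "X1 \<inter> translate p (span B2) \<in> Hk scale m"
  shows "perp_star scale xi X1 (translate p (span B2))"
proof -
  have "p \<in> X1" using X1(2) translate_self by blast
  obtain B where B: "finite B" "independent B" "card B = card B1 + m" "X1 = translate p (span B)"
    using Hk_obtain_basis[OF X1(1) \<open>p \<in> X1\<close>] by blast
  have "p \<in> X1 \<inter> translate p (span B2)" using \<open>p \<in> X1\<close> translate_self[OF subspace_span] by blast
  then obtain C where C: "finite C" "independent C" "card C = m"
    "X1 \<inter> translate p (span B2) = translate p (span C)"
    using Hk_obtain_basis[OF X1(3)] by blast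
  have "translate p (span B \<inter> span B2) = translate p (span C)"
    using B(4) C(4) by (simp add: translate_Int)
  then have D: "span B \<inter> span B2 = span C" by (simp only: translate_inj)
  have "span B1 \<subseteq> span B" using X1(2) B(4) translate_subset_iff by blast
  have CB1: "span C \<inter> span B1 \<subseteq> {0}" using D assms(6) by blast
  have "span (C \<union> B1) = span B"
  proof (rule span_eq_if_card_eq)
    show "independent (C \<union> B1)" using independent_Un_card(1)[OF C(2,1) B1(2,1) CB1] .
    show "C \<union> B1 \<subseteq> span B" using \<open>span B1 \<subseteq> span B\<close> D span_superset by blast
    show "card (C \<union> B1) = card B"
      using independent_Un_card(2)[OF C(2,1) B1(2,1) CB1] B(3) C(3) by simp
  qed (rule B(1))
  then have W1_eq: "span (span C \<union> span B1) = span B" by (simp add: span_Un_span)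
  have proper: "span B \<inter> span B2 \<noteq> span B2"
  proof
    assume "span B \<inter> span B2 = span B2"
    then have "card C = card B2"
      using D dim_span_eq_card_independent[OF C(2)] dim_span_eq_card_independent[OF B2(2)] by simp
    moreover have "0 < card B1" using B1(1,3) by (simp add: card_gt_0_iff)
    ultimately show False using C(3) assms(8) by linarith
  qed
  have "span B1 \<noteq> {0}" using span_eq_zero_iff B1(2,3) by blast
  then have "perp_star scale xi (translate p (span B)) (translate p (span B2))"
    using perp_star_translate_if_orth[of "span B1" "span B" "span B2" C p] C(1) D W1_eq
      assms(6,7) proper by simp
  then show ?thesis using B(4) by simp
qed

lemma orth_if_perp_star_Hk_extensions:
  assumes B1: "finite B1" "independent B1" and B2: "finite B2" "independent B2"
    and "span B1 \<inter> span B2 = {0}" "m < card B2"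
    and ext: "\<forall>X1 \<in> Hk scale (card B1 + m). translate p (span B1) \<subseteq> X1 \<and>
      X1 \<inter> translate p (span B2) \<in> Hk scale m \<longrightarrow> perp_star scale xi X1 (translate p (span B2))"
  shows "orth (span B1) (span B2)"
  unfolding orth_def
proof (intro ballI)
  fix u w assume u: "u \<in> span B1" and w: "w \<in> span B2"
  obtain C' where C': "C' \<subseteq> span B2" "independent C'" "finite C'" "card B2 \<le> card C' + 1" "orth C' {w}"
    using independent_orthogonal_obtain B2 w by blast
  have "m \<le> card C'" using C'(4) assms(6) by linarith
  then obtain C where C: "C \<subseteq> C'" "card C = m" by (rule obtain_subset_with_card_n)
  have "finite C" "independent C" using C(1) C'(2,3) finite_subset independent_mono by blast+
  have CB2: "span C \<subseteq> span B2" using C(1) C'(1) span_minimal by blast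
  define W1 where "W1 = span (B1 \<union> C)"
  have D: "W1 \<inter> span B2 = span C"
    using span_Un_Int_eq[OF subspace_span subspace_span subspace_span CB2 assms(5)]
    unfolding W1_def span_Un_span .
  have "independent (B1 \<union> C)" "card (B1 \<union> C) = card B1 + m"
    using independent_Un_card[OF B1(2,1) \<open>independent C\<close> \<open>finite C\<close>] assms(5) CB2 C(2) by auto
  then have "translate p W1 \<in> Hk scale (card B1 + m)"
    unfolding W1_def using Hk_translate_span B1(1) \<open>finite C\<close> by (metis finite_Un)
  moreover have "translate p (span B1) \<subseteq> translate p W1"
    unfolding W1_def translate_subset_iff by (simp add: span_mono)
  moreover have "translate p W1 \<inter> translate p (span B2) \<in> Hk scale m"
    unfolding translate_Int D using Hk_translate_span \<open>finite C\<close> \<open>independent C\<close> C(2) by blast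
  ultimately have "perp_star scale xi (translate p W1) (translate p (span B2))" using ext by blast
  moreover have "orth (W1 \<inter> span B2) {w}"
    unfolding D using orth_span_right orth_commute orth_mono[OF C'(5) C(1)] by blast
  moreover have "u \<in> W1" unfolding W1_def using u span_mono by blast
  moreover have "subspace W1" unfolding W1_def by simp
  ultimately show "xi u w = 0"
    using form_eq_0_if_perp_star_translate[of W1 "span B2" p u w] w by simp
qed

end

theorem lemma2p2:
  fixes scale :: "'a::field \<Rightarrow> 'b::ab_group_add \<Rightarrow> 'b"
    and xi :: "'b \<Rightarrow> 'b \<Rightarrow> 'a"
    and k1 k2 m :: nat
    and Y1 X2 :: "'b set"
  assumes "vector_space scale"
    and "sym_bilinear_form scale xi"
    and "nondegenerate_form xi"
    and "no_isotropic xi"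
    and "k1 \<le> k2"
    and "m \<le> k1"
    and "dim_ge scale (k1 + k2 - m)"
    and "Y1 \<in> Hk scale (k1 - m)"
    and "X2 \<in> Hk scale k2"
    and "\<exists>p. Y1 \<inter> X2 = {p}"
  shows "perp_star scale xi Y1 X2 \<longleftrightarrow>
         (\<forall>X1 \<in> Hk scale k1. Y1 \<subseteq> X1 \<and> X1 \<inter> X2 \<in> Hk scale m \<longrightarrow> perp_star scale xi X1 X2)"
proof -
  interpret anisotropic_form scale xi
    using assms(1,2,4) by (simp add: anisotropic_form_def anisotropic_form_axioms_def)
  obtain p where p: "Y1 \<inter> X2 = {p}" using assms(10) by blast
  obtain B1 where B1: "finite B1" "independent B1" "card B1 = k1 - m" "Y1 = translate p (span B1)"
    using Hk_obtain_basis assms(8) p by blast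
  obtain B2 where B2: "finite B2" "independent B2" "card B2 = k2" "X2 = translate p (span B2)"
    using Hk_obtain_basis assms(9) p by blast
  have "translate p (span B1 \<inter> span B2) = translate p {0}"
    using p B1(4) B2(4) by (simp add: translate_Int translate_singleton_0)
  then have complementary: "span B1 \<inter> span B2 = {0}" by (simp only: translate_inj)
  have card_B1: "card B1 + m = k1" using B1(3) assms(6) by simp
  have B1_empty: "B1 = {} \<longleftrightarrow> \<not> m < k1" using B1(1,3) assms(6) by auto
  have B2_empty: "m < k1 \<Longrightarrow> B2 \<noteq> {}" using B2(3) assms(5) by auto
  have card_le: "card B1 + m \<le> card B2" using card_B1 B2(3) assms(5) by simp
  have "perp_star scale xi Y1 X2 \<longleftrightarrow> m < k1 \<and> orth (span B1) (span B2)"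
    unfolding B1(4) B2(4) perp_star_translate_complementary[OF subspace_span subspace_span complementary]
      span_eq_zero_iff[OF B1(2)] span_eq_zero_iff[OF B2(2)]
    using B1_empty B2_empty by blast
  also have "\<dots> \<longleftrightarrow> (\<forall>X1 \<in> Hk scale k1. Y1 \<subseteq> X1 \<and> X1 \<inter> X2 \<in> Hk scale m \<longrightarrow> perp_star scale xi X1 X2)"
  proof (intro iffI ballI impI conjI; (elim conjE)?)
    fix X1 assume "m < k1" "orth (span B1) (span B2)" "X1 \<in> Hk scale k1" "Y1 \<subseteq> X1" "X1 \<inter> X2 \<in> Hk scale m"
    moreover have "B1 \<noteq> {}" using \<open>m < k1\<close> B1_empty by blast
    ultimately show "perp_star scale xi X1 X2"
      using perp_star_Hk_extension[of B1 B2 m X1 p] B1(1,2) B2(1,2) complementary card_le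
      unfolding B1(4) B2(4) card_B1 by blast
  next
    assume ext: "\<forall>X1 \<in> Hk scale k1. Y1 \<subseteq> X1 \<and> X1 \<inter> X2 \<in> Hk scale m \<longrightarrow> perp_star scale xi X1 X2"
    then have "B1 \<noteq> {}"
      using nonempty_if_perp_star_Hk_extensions[of B2 B1 m p] B2(1,2) card_le
      unfolding B1(4) B2(4) card_B1 by blast
    then show "m < k1" using B1_empty by blast
    then have "m < card B2" using B2(3) assms(5) by simp
    then show "orth (span B1) (span B2)"
      using orth_if_perp_star_Hk_extensions[OF B1(1,2) B2(1,2) complementary, of m p] ext
      unfolding B1(4) B2(4) card_B1 by blast
  qed
  finally show ?thesis .
qed

end
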